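(* Let $m,n,k$ be positive integers, $A\in\mathbb{R}^{m\times n}$ satisfying the $(2k+1)$-RIP, $x^*\in\mathbb{R}^n$ with support $S^*$, $|S^*|\le k$, $e\in\mathbb{R}^m$, $y=Ax^*+e$. For every initialization $\mathcal{X}^0$, every $\eta>0$ and every $t\in\mathbb{N}$, the SEA iterates satisfy $$\|(x^t-x^* )_{S^t}\|_2\le\frac{\delta_{2k}}{1-\delta_k}\frac{\|u^t\|_2}{\eta}+\frac{\sqrt{1+\delta_k}}{1-\delta_k}\|e\|_2.$$
   Context: For $l\in\{1,\dots,n\}$, the restricted isometry constant $\delta_l$ of $A$ is the smallest $\delta\ge0$ such that $(1-\delta)\|x\|_2^2\le\|Ax\|_2^2\le(1+\delta)\|x\|_2^2$ for all $x$ with at most $l$ nonzero entries; $A$ satisfies the $l$-RIP if $\delta_l<1$. $S^*=\{i:x^*_i\neq0\}$. For $v\in\mathbb{R}^n$, $\mathrm{largest}_k(v)$ is the set of indices of the $k$ entries of $v$ with largest absolute value (ties broken by selecting the highest indices). For $S\subseteq\{1,\dots,n\}$, $A_S$ is the submatrix of columns indexed by $S$, $v_S$ the restriction of a vector to $S$, $A_S^\dagger$ the Moore–Penrose pseudoinverse of $A_S$. SEA with initialization $\mathcal{X}^0$ and step size $\eta$ generates, for $t=0,1,2,\dots$: $S^t=\mathrm{largest}_k(\mathcal{X}^t)$; $x^t_i=0$ for $i\notin S^t$ and $x^t_{S^t}=A_{S^t}^\dagger y$; $\mathcal{X}^{t+1}=\mathcal{X}^t-\eta A^T(Ax^t-y)$.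 The oracle direction is $u^t_i=-\eta x^*_i$ if $i\in S^*\setminus S^t$ and $u^t_i=0$ otherwise. *)

theory Defs
  imports Complex_Main
begin

text \<open>Vectors in R^n are functions nat \<Rightarrow> real, only the entries with
index in {0..<n} matter. An m\<times>n matrix is a function nat \<Rightarrow> nat \<Rightarrow> real (row, column),
only entries in {0..<m}\<times>{0..<n} matter. Submatrices and pseudoinverses are handled
with matrices whose rows/columns are indexed by arbitrary finite index sets.\<close>

definition vnorm :: "nat set \<Rightarrow> (nat \<Rightarrow> real) \<Rightarrow> real" where
  "vnorm I v = sqrt (\<Sum>i\<in>I. (v i)\<^sup>2)"

definition mulvec :: "nat set \<Rightarrow> nat set \<Rightarrow> (nat \<Rightarrow> nat \<Rightarrow> real) \<Rightarrow> (nat \<Rightarrow> real) \<Rightarrow> (nat \<Rightarrow> real)" where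
  "mulvec R C M v = (\<lambda>i. if i \<in> R then (\<Sum>j\<in>C. M i j * v j) else 0)"

definition mrestrict :: "nat set \<Rightarrow> nat set \<Rightarrow> (nat \<Rightarrow> nat \<Rightarrow> real) \<Rightarrow> (nat \<Rightarrow> nat \<Rightarrow> real)" where
  "mrestrict R C M = (\<lambda>i j. if i \<in> R \<and> j \<in> C then M i j else 0)"

definition matmul :: "nat set \<Rightarrow> nat set \<Rightarrow> nat set \<Rightarrow> (nat \<Rightarrow> nat \<Rightarrow> real) \<Rightarrow> (nat \<Rightarrow> nat \<Rightarrow> real) \<Rightarrow> (nat \<Rightarrow> nat \<Rightarrow> real)" where
  "matmul R K C M N = (\<lambda>i j. if i \<in> R \<and> j \<in> C then (\<Sum>l\<in>K. M i l * N l j) else 0)"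

definition pinv :: "nat set \<Rightarrow> nat set \<Rightarrow> (nat \<Rightarrow> nat \<Rightarrow> real) \<Rightarrow> (nat \<Rightarrow> nat \<Rightarrow> real)" where
  "pinv R C M = (THE G. mrestrict C R G = G \<and>
      matmul R R C (matmul R C R M G) M = mrestrict R C M \<and>
      matmul C C R (matmul C R C G M) G = G \<and>
      (\<forall>i\<in>R. \<forall>j\<in>R. matmul R C R M G i j = matmul R C R M G j i) \<and>
      (\<forall>i\<in>C. \<forall>j\<in>C. matmul C R C G M i j = matmul C R C G M j i))"

definition rip_const :: "nat \<Rightarrow> nat \<Rightarrow> (nat \<Rightarrow> nat \<Rightarrow> real) \<Rightarrow> nat \<Rightarrow> real" where
  "rip_const m n A l = Inf {\<delta>. \<delta> \<ge> 0 \<and>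
      (\<forall>x. card {i\<in>{0..<n}. x i \<noteq> 0} \<le> l \<longrightarrow>
         (1 - \<delta>) * (vnorm {0..<n} x)\<^sup>2 \<le> (vnorm {0..<m} (mulvec {0..<m} {0..<n} A x))\<^sup>2 \<and>
         (vnorm {0..<m} (mulvec {0..<m} {0..<n} A x))\<^sup>2 \<le> (1 + \<delta>) * (vnorm {0..<n} x)\<^sup>2)}"

text \<open>largest_k(v): indices of the k entries of largest absolute value, ties broken
by preferring higher indices. j "beats" i if |v j| > |v i|, or equal and j > i.\<close>
definition largest :: "nat \<Rightarrow> nat \<Rightarrow> (nat \<Rightarrow> real) \<Rightarrow> nat set" where
  "largest n k v = {i\<in>{0..<n}.
      card {j\<in>{0..<n}. \<bar>v j\<bar> > \<bar>v i\<bar> \<or> (\<bar>v j\<bar> = \<bar>v i\<bar> \<and> j > i)} < k}"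

definition sea_S :: "nat \<Rightarrow> nat \<Rightarrow> (nat \<Rightarrow> real) \<Rightarrow> nat set" where
  "sea_S n k X = largest n k X"

definition sea_x :: "nat \<Rightarrow> nat \<Rightarrow> nat \<Rightarrow> (nat \<Rightarrow> nat \<Rightarrow> real) \<Rightarrow> (nat \<Rightarrow> real) \<Rightarrow> (nat \<Rightarrow> real) \<Rightarrow> (nat \<Rightarrow> real)" where
  "sea_x m n k A y X = (let S = sea_S n k X in
     mulvec S {0..<m} (pinv {0..<m} S (mrestrict {0..<m} S A)) y)"

primrec sea_X :: "nat \<Rightarrow> nat \<Rightarrow> nat \<Rightarrow> (nat \<Rightarrow> nat \<Rightarrow> real) \<Rightarrow> (nat \<Rightarrow> real) \<Rightarrow> real \<Rightarrow> (nat \<Rightarrow> real) \<Rightarrow> nat \<Rightarrow> (nat \<Rightarrow> real)" where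
  "sea_X m n k A y \<eta> X0 0 = X0"
| "sea_X m n k A y \<eta> X0 (Suc t) =
     (let X = sea_X m n k A y \<eta> X0 t; x = sea_x m n k A y X in
      (\<lambda>i. X i - \<eta> * (\<Sum>r\<in>{0..<m}. A r i * ((\<Sum>j\<in>{0..<n}. A r j * x j) - y r))))"

end

(*
  Only the current support estimate S = S^t matters, not how the iteration reached it.
  x^t is the least-squares solution on S, so the residual A x^t - y is orthogonal to the
  columns of A_S. Write x^t - x* = d - w with d the restriction of x^t - x* to S and w the
  restriction of x* to S* - S; the residual is then A d - A w - e, and orthogonality gives
  ||A d||^2 = <A d, A w> + <A d, e>. The RIP bounds the left side below by (1 - delta_k) ||d||^2,
  the first inner product by delta_2k ||d|| ||w|| (d and w have disjoint supports of total size
  at most 2k) and the second by sqrt(1 + delta_k) ||d|| ||e||. Dividing by ||d|| gives the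
  claim, since ||u^t|| / eta = ||w||.
*)

theory Submission
  imports Defs "HOL-Library.Function_Algebras" "HOL-Analysis.L2_Norm"
begin

section \<open>Solvability of injective square systems\<close>

lemma (in vector_space) independent_card_ge_imp_spanning:
  assumes "finite B" "independent C" "C \<subseteq> span B" "card B \<le> card C"
  shows "span B \<subseteq> span C"
proof
  fix w assume w: "w \<in> span B"
  show "w \<in> span C"
  proof (rule ccontr)
    assume "w \<notin> span C"
    then have ind: "independent (insert w C)" and "w \<notin> C"
      using assms(2) independent_insertI span_base by blast+
    have "insert w C \<subseteq> span B"
      using w assms(3) by blast
    from independent_span_bound[OF assms(1) ind this] \<open>w \<notin> C\<close> assms(4)
    show False
      by auto
  qed
qed

lemma (in vector_space) linear_inj_on_span_imp_surj_on:
  assumes "Vector_Spaces.linear scale scale f" "finite B" "independent B" "f ` B \<subseteq> span B"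
    and "inj_on f (span B)"
  shows "f ` span B = span B"
proof -
  interpret f: Vector_Spaces.linear scale scale f by fact
  have "span B \<subseteq> span (f ` B)"
  proof (rule independent_card_ge_imp_spanning)
    show "independent (f ` B)"
      using f.independent_injective_image assms(3,5) by blast
    show "card B \<le> card (f ` B)"
      using inj_on_subset[OF assms(5) span_superset] by (simp add: card_image)
  qed (use assms(2,4) in auto)
  moreover have "span (f ` B) \<subseteq> span B"
    using span_minimal[OF assms(4) subspace_span] .
  ultimately show ?thesis
    using f.span_image by auto
qed

lemma sum_fun_apply: "(\<Sum>a\<in>A. f a) x = (\<Sum>a\<in>A. f a x)"
  by (induction A rule: infinite_finite_induct) auto

interpretation fun_space: vector_space "\<lambda>(c::real) (v::'a \<Rightarrow> real) i. c * v i"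
  by unfold_locales (auto simp: fun_eq_iff algebra_simps)

definition unit_vec :: "'a \<Rightarrow> 'a \<Rightarrow> real" where
  "unit_vec i = (\<lambda>j. if j = i then 1 else 0)"

lemma span_unit_vec:
  assumes "finite C"
  shows "fun_space.span (unit_vec ` C) = {v. \<forall>i. i \<notin> C \<longrightarrow> v i = 0}"
proof
  show "fun_space.span (unit_vec ` C) \<subseteq> {v. \<forall>i. i \<notin> C \<longrightarrow> v i = 0}"
    by (rule fun_space.span_minimal) (auto simp: unit_vec_def fun_space.subspace_def)
  show "{v. \<forall>i. i \<notin> C \<longrightarrow> v i = 0} \<subseteq> fun_space.span (unit_vec ` C)"
  proof
    fix v :: "'a \<Rightarrow> real" assume v: "v \<in> {v. \<forall>i. i \<notin> C \<longrightarrow> v i = 0}"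
    have "v = (\<Sum>i\<in>C. (\<lambda>j. v i * unit_vec i j))"
      using v assms by (auto simp: fun_eq_iff sum_fun_apply unit_vec_def if_distrib sum.delta cong: if_cong)
    also have "\<dots> \<in> fun_space.span (unit_vec ` C)"
      by (intro fun_space.span_sum fun_space.span_scale fun_space.span_base) auto
    finally show "v \<in> fun_space.span (unit_vec ` C)" .
  qed
qed

lemma independent_unit_vec: "fun_space.independent (unit_vec ` C)"
proof
  assume "fun_space.dependent (unit_vec ` C)"
  then obtain i where i: "i \<in> C" "unit_vec i \<in> fun_space.span (unit_vec ` C - {unit_vec i})"
    unfolding fun_space.dependent_def by blast
  have "fun_space.span (unit_vec ` C - {unit_vec i}) \<subseteq> {v. v i = 0}"
    by (rule fun_space.span_minimal) (auto simp: unit_vec_def fun_space.subspace_def)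
  with i show False
    by (auto simp: unit_vec_def)
qed

definition independent_columns :: "nat set \<Rightarrow> nat set \<Rightarrow> (nat \<Rightarrow> nat \<Rightarrow> real) \<Rightarrow> bool" where
  "independent_columns R C A \<longleftrightarrow>
     (\<forall>v. (\<forall>j. j \<notin> C \<longrightarrow> v j = 0) \<and> (\<forall>r\<in>R. (\<Sum>j\<in>C. A r j * v j) = 0) \<longrightarrow> v = 0)"

lemma independent_columnsI:
  assumes "\<And>v. \<forall>j. j \<notin> C \<longrightarrow> v j = 0 \<Longrightarrow> \<forall>r\<in>R. (\<Sum>j\<in>C. A r j * v j) = 0 \<Longrightarrow> v = 0"
  shows "independent_columns R C A"
  using assms unfolding independent_columns_def by blast

lemma independent_columnsD:
  assumes "independent_columns R C A" "\<forall>j. j \<notin> C \<longrightarrow> v j = 0"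
    and "\<forall>r\<in>R. (\<Sum>j\<in>C. A r j * v j) = 0"
  shows "v = 0"
  using assms unfolding independent_columns_def by blast

(* v \<mapsto> B v is an injective linear map of the finite-dimensional space of C-supported
   vectors into itself, hence onto. *)
lemma square_system_solvable:
  assumes "finite C" "independent_columns C C B"
  obtains v where "\<forall>j. j \<notin> C \<longrightarrow> v j = 0" "\<forall>i\<in>C. (\<Sum>j\<in>C. B i j * v j) = b i"
proof -
  define V where "V = {v :: nat \<Rightarrow> real. \<forall>j. j \<notin> C \<longrightarrow> v j = 0}"
  define f where "f v = (\<lambda>i. if i \<in> C then \<Sum>j\<in>C. B i j * v j else 0)" for v :: "nat \<Rightarrow> real"
  have span: "fun_space.span (unit_vec ` C) = V"
    unfolding V_def using span_unit_vec[OF assms(1)] .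
  have lin: "Vector_Spaces.linear (\<lambda>c v i. c * v i) (\<lambda>c v i. c * v i) f"
    unfolding Vector_Spaces.linear_iff
    by (simp add: fun_space.vector_space_axioms f_def fun_eq_iff sum.distrib sum_distrib_left
        distrib_left mult.left_commute)
  then interpret f: Vector_Spaces.linear "\<lambda>c v i. c * v i" "\<lambda>c v i. c * v i" f .
  have "inj_on f (fun_space.span (unit_vec ` C))"
    unfolding f.inj_on_iff_eq_0[OF fun_space.subspace_span]
  proof (intro ballI impI)
    fix v assume "v \<in> fun_space.span (unit_vec ` C)" "f v = 0"
    have "(\<Sum>j\<in>C. B i j * v j) = 0" if "i \<in> C" for i
      using fun_cong[OF \<open>f v = 0\<close>, of i] that by (simp add: f_def)
    with \<open>v \<in> fun_space.span (unit_vec ` C)\<close> show "v = 0"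
      by (intro independent_columnsD[OF assms(2)]) (auto simp: span V_def)
  qed
  moreover have "f ` unit_vec ` C \<subseteq> fun_space.span (unit_vec ` C)"
    unfolding span by (auto simp: V_def f_def)
  ultimately have "f ` V = V"
    using fun_space.linear_inj_on_span_imp_surj_on[OF lin finite_imageI[OF assms(1)] independent_unit_vec]
    by (simp add: span)
  moreover have "(\<lambda>i. if i \<in> C then b i else 0) \<in> V"
    by (simp add: V_def)
  ultimately have "(\<lambda>i. if i \<in> C then b i else 0) \<in> f ` V"
    by simp
  then obtain v where v: "(\<lambda>i. if i \<in> C then b i else 0) = f v" "v \<in> V"
    by (rule imageE)
  have "(\<Sum>j\<in>C. B i j * v j) = b i" if "i \<in> C" for i
    using fun_cong[OF v(1), of i] that by (simp add: f_def)
  with v(2) show ?thesis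
    by (intro that) (auto simp: V_def)
qed

section \<open>The pseudoinverse of a matrix with independent columns\<close>

definition mprod :: "nat set \<Rightarrow> (nat \<Rightarrow> nat \<Rightarrow> real) \<Rightarrow> (nat \<Rightarrow> nat \<Rightarrow> real) \<Rightarrow> nat \<Rightarrow> nat \<Rightarrow> real"
  where "mprod K X Y i j = (\<Sum>l\<in>K. X i l * Y l j)"

lemma mprod_assoc: "mprod K2 (mprod K1 X Y) Z = mprod K1 X (mprod K2 Y Z)"
  unfolding mprod_def
  by (auto simp: fun_eq_iff sum_distrib_left sum_distrib_right mult.assoc intro: sum.swap)

definition gram :: "nat set \<Rightarrow> (nat \<Rightarrow> nat \<Rightarrow> real) \<Rightarrow> nat \<Rightarrow> nat \<Rightarrow> real" where
  "gram R A = mprod R (\<lambda>i r. A r i) A"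

lemma gram_sym: "gram R A i j = gram R A j i"
  by (simp add: gram_def mprod_def mult.commute)

lemma gram_mulvec:
  "(\<Sum>j\<in>C. gram R A i j * v j) = (\<Sum>r\<in>R. A r i * (\<Sum>j\<in>C. A r j * v j))"
  using fun_cong[OF fun_cong[OF mprod_assoc[of C R "\<lambda>i r. A r i" A "\<lambda>j _. v j"]], of i 0]
  by (simp add: gram_def mprod_def)

lemma gram_independent_columns:
  assumes "finite R" "independent_columns R C A"
  shows "independent_columns C C (gram R A)"
proof (rule independent_columnsI)
  fix v assume v: "\<forall>j. j \<notin> C \<longrightarrow> v j = 0"
    and gram_v: "\<forall>i\<in>C. (\<Sum>j\<in>C. gram R A i j * v j) = 0"
  have "(\<Sum>r\<in>R. (\<Sum>j\<in>C. A r j * v j)\<^sup>2) = (\<Sum>r\<in>R. \<Sum>i\<in>C. v i * A r i * (\<Sum>j\<in>C. A r j * v j))"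
    by (simp add: power2_eq_square sum_distrib_right mult.commute)
  also have "\<dots> = (\<Sum>i\<in>C. \<Sum>r\<in>R. v i * A r i * (\<Sum>j\<in>C. A r j * v j))"
    by (rule sum.swap)
  also have "\<dots> = (\<Sum>i\<in>C. v i * (\<Sum>j\<in>C. gram R A i j * v j))"
    by (simp add: gram_mulvec sum_distrib_left mult.assoc)
  also have "\<dots> = 0"
    using gram_v by simp
  finally have "\<forall>r\<in>R. (\<Sum>j\<in>C. A r j * v j) = 0"
    using assms(1) by (simp add: sum_nonneg_eq_0_iff)
  with v show "v = 0"
    by (rule independent_columnsD[OF assms(2)])
qed

definition is_pinv :: "nat set \<Rightarrow> nat set \<Rightarrow> (nat \<Rightarrow> nat \<Rightarrow> real) \<Rightarrow> (nat \<Rightarrow> nat \<Rightarrow> real) \<Rightarrow> bool"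
  where "is_pinv R C M G \<longleftrightarrow> mrestrict C R G = G \<and>
      matmul R R C (matmul R C R M G) M = mrestrict R C M \<and>
      matmul C C R (matmul C R C G M) G = G \<and>
      (\<forall>i\<in>R. \<forall>j\<in>R. matmul R C R M G i j = matmul R C R M G j i) \<and>
      (\<forall>i\<in>C. \<forall>j\<in>C. matmul C R C G M i j = matmul C R C G M j i)"

lemma pinv_eq_The_is_pinv: "pinv R C M = (THE G. is_pinv R C M G)"
  unfolding pinv_def is_pinv_def ..

lemma is_pinv_mrestrict_iff:
  "is_pinv R C (mrestrict R C A) G \<longleftrightarrow>
     (\<forall>i j. \<not> (i \<in> C \<and> j \<in> R) \<longrightarrow> G i j = 0) \<and>
     (\<forall>i\<in>R. \<forall>j\<in>C. mprod R (mprod C A G) A i j = A i j) \<and>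
     (\<forall>i\<in>C. \<forall>j\<in>R. mprod C (mprod R G A) G i j = G i j) \<and>
     (\<forall>i\<in>R. \<forall>j\<in>R. mprod C A G i j = mprod C A G j i) \<and>
     (\<forall>i\<in>C. \<forall>j\<in>C. mprod R G A i j = mprod R G A j i)"
  (is "_ \<longleftrightarrow> ?supp \<and> _")
proof -
  have "mrestrict C R G = G \<longleftrightarrow> ?supp"
    by (auto simp: mrestrict_def fun_eq_iff)
  moreover have "?supp \<Longrightarrow> matmul R R C (matmul R C R (mrestrict R C A) G) (mrestrict R C A)
      = mrestrict R C (mrestrict R C A) \<longleftrightarrow> (\<forall>i\<in>R. \<forall>j\<in>C. mprod R (mprod C A G) A i j = A i j)"
    by (auto simp: matmul_def mrestrict_def mprod_def fun_eq_iff)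
  moreover have "?supp \<Longrightarrow> matmul C C R (matmul C R C G (mrestrict R C A)) G = G
      \<longleftrightarrow> (\<forall>i\<in>C. \<forall>j\<in>R. mprod C (mprod R G A) G i j = G i j)"
    by (auto simp: matmul_def mrestrict_def mprod_def fun_eq_iff)
  ultimately show ?thesis
    unfolding is_pinv_def by (auto simp: matmul_def mrestrict_def mprod_def)
qed

lemma is_pinv_gram:
  assumes "is_pinv R C (mrestrict R C A) G" "i \<in> C" "r \<in> R"
  shows "mprod C (gram R A) G i r = A r i"
proof -
  from assms(1) have AGA: "\<forall>i\<in>R. \<forall>j\<in>C. mprod R (mprod C A G) A i j = A i j"
    and AG_sym: "\<forall>i\<in>R. \<forall>j\<in>R. mprod C A G i j = mprod C A G j i"
    unfolding is_pinv_mrestrict_iff by blast+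
  have "mprod C (gram R A) G i r = mprod R (\<lambda>i r. A r i) (mprod C A G) i r"
    by (simp add: gram_def mprod_assoc)
  also have "\<dots> = mprod R (mprod C A G) A r i"
    using AG_sym assms(3) by (auto simp: mprod_def mult.commute intro: sum.cong)
  also have "\<dots> = A r i"
    using AGA assms(2,3) by blast
  finally show ?thesis .
qed

lemma is_pinv_unique:
  assumes "independent_columns C C (gram R A)"
    and "is_pinv R C (mrestrict R C A) G1" "is_pinv R C (mrestrict R C A) G2"
  shows "G1 = G2"
proof (intro ext)
  fix p r
  have supp: "G1 i j = 0" "G2 i j = 0" if "\<not> (i \<in> C \<and> j \<in> R)" for i j
    using assms(2,3) that unfolding is_pinv_mrestrict_iff by blast+
  show "G1 p r = G2 p r"
  proof (cases "r \<in> R")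
    case True
    have "(\<lambda>p. G1 p r - G2 p r) = 0"
    proof (rule independent_columnsD[OF assms(1)])
      show "\<forall>j. j \<notin> C \<longrightarrow> G1 j r - G2 j r = 0"
        using supp by simp
      show "\<forall>i\<in>C. (\<Sum>j\<in>C. gram R A i j * (G1 j r - G2 j r)) = 0"
        using is_pinv_gram[OF assms(2) _ True] is_pinv_gram[OF assms(3) _ True]
        by (simp add: mprod_def right_diff_distrib sum_subtractf)
    qed
    then show ?thesis
      by (simp add: fun_eq_iff)
  next
    case False
    then show ?thesis
      using supp by simp
  qed
qed

lemma gram_solution_left_inverse:
  assumes "finite C" "independent_columns C C (gram R A)"
    and "\<forall>i\<in>C. \<forall>r\<in>R. mprod C (gram R A) G i r = A r i"
    and "p \<in> C" "j \<in> C"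
  shows "mprod R G A p j = (if p = j then 1 else 0)"
proof -
  define z where "z p = (if p \<in> C then mprod R G A p j - (if p = j then 1 else 0) else 0)" for p
  have "z = 0"
  proof (rule independent_columnsD[OF assms(2)])
    show "\<forall>q. q \<notin> C \<longrightarrow> z q = 0"
      by (simp add: z_def)
    show "\<forall>i\<in>C. (\<Sum>q\<in>C. gram R A i q * z q) = 0"
    proof
      fix i assume "i \<in> C"
      have "(\<Sum>q\<in>C. gram R A i q * z q)
          = (\<Sum>q\<in>C. gram R A i q * mprod R G A q j - gram R A i q * (if q = j then 1 else 0))"
        by (intro sum.cong) (simp_all add: z_def right_diff_distrib)
      also have "\<dots> = mprod C (gram R A) (mprod R G A) i j - gram R A i j"
        using assms(1,5) by (simp add: sum_subtractf mprod_def if_distrib[of "(*) _"] cong: if_cong)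
      also have "mprod C (gram R A) (mprod R G A) i j = mprod R (mprod C (gram R A) G) A i j"
        by (simp add: mprod_assoc)
      also have "\<dots> = gram R A i j"
        using assms(3) \<open>i \<in> C\<close> by (simp add: mprod_def gram_def)
      finally show "(\<Sum>q\<in>C. gram R A i q * z q) = 0"
        by simp
    qed
  qed
  then have "z p = 0"
    by simp
  with assms(4) show ?thesis
    by (simp add: z_def split: if_splits)
qed

lemma is_pinv_of_gram_solution:
  assumes "finite C" "independent_columns C C (gram R A)"
    and G0: "\<forall>i j. \<not> (i \<in> C \<and> j \<in> R) \<longrightarrow> G i j = 0"
    and BG: "\<forall>i\<in>C. \<forall>r\<in>R. mprod C (gram R A) G i r = A r i"
  shows "is_pinv R C (mrestrict R C A) G"
proof -
  have GA: "mprod R G A p j = (if p = j then 1 else 0)" if "p \<in> C" "j \<in> C" for p j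
    using gram_solution_left_inverse[OF assms(1,2) BG that] .
  have AG: "mprod C A G a b = (\<Sum>l\<in>C. \<Sum>p\<in>C. gram R A l p * G p a * G l b)" if "a \<in> R" for a b
  proof -
    have "mprod C A G a b = (\<Sum>l\<in>C. mprod C (gram R A) G l a * G l b)"
      using BG that by (simp add: mprod_def[of C A])
    then show ?thesis
      by (simp add: mprod_def sum_distrib_right)
  qed
  show ?thesis
    unfolding is_pinv_mrestrict_iff
  proof (intro conjI ballI)
    show "\<forall>i j. \<not> (i \<in> C \<and> j \<in> R) \<longrightarrow> G i j = 0"
      by (fact G0)
    show "mprod R (mprod C A G) A i j = A i j" if "i \<in> R" "j \<in> C" for i j
      using GA \<open>j \<in> C\<close> assms(1)
      by (simp add: mprod_assoc mprod_def[of C] if_distrib[of "(*) _"] cong: if_cong)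
    show "mprod C (mprod R G A) G i j = G i j" if "i \<in> C" "j \<in> R" for i j
      using GA \<open>i \<in> C\<close> assms(1)
      by (simp add: mprod_def[of C] if_distrib[of "\<lambda>x. x * _"] cong: if_cong)
    show "mprod C A G i j = mprod C A G j i" if "i \<in> R" "j \<in> R" for i j
    proof -
      have "mprod C A G i j = (\<Sum>l\<in>C. \<Sum>p\<in>C. gram R A l p * G p i * G l j)"
        using AG \<open>i \<in> R\<close> .
      also have "\<dots> = (\<Sum>p\<in>C. \<Sum>l\<in>C. gram R A l p * G p i * G l j)"
        by (rule sum.swap)
      also have "\<dots> = (\<Sum>p\<in>C. \<Sum>l\<in>C. gram R A p l * G l j * G p i)"
        by (intro sum.cong refl) (metis gram_sym mult.commute mult.left_commute)
      also have "\<dots> = mprod C A G j i"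
        using AG \<open>j \<in> R\<close> by simp
      finally show ?thesis .
    qed
    show "mprod R G A i j = mprod R G A j i" if "i \<in> C" "j \<in> C" for i j
      using GA that by simp
  qed
qed

lemma is_pinv_exists:
  assumes "finite C" "independent_columns C C (gram R A)"
  obtains G where "is_pinv R C (mrestrict R C A) G"
proof -
  have "\<forall>r\<in>R. \<exists>v. (\<forall>j. j \<notin> C \<longrightarrow> v j = 0) \<and> (\<forall>i\<in>C. (\<Sum>j\<in>C. gram R A i j * v j) = A r i)"
    using square_system_solvable[OF assms] by metis
  then obtain col where col: "\<forall>r\<in>R. (\<forall>j. j \<notin> C \<longrightarrow> col r j = 0) \<and>
      (\<forall>i\<in>C. (\<Sum>j\<in>C. gram R A i j * col r j) = A r i)"
    by metis
  define G where "G i r = (if r \<in> R then col r i else 0)" for i r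
  have "is_pinv R C (mrestrict R C A) G"
    by (rule is_pinv_of_gram_solution[OF assms]) (use col in \<open>auto simp: G_def mprod_def\<close>)
  then show thesis ..
qed

(* pinv is a definite description, so it needs a unique solution of the Penrose equations.
   For independent columns this solution is G = (A^T A)^-1 A^T, characterised by A^T A G = A^T
   (is_pinv_gram), which is all that is used of it. *)
lemma pinv_is_pinv:
  assumes "finite R" "finite C" "independent_columns R C A"
  shows "is_pinv R C (mrestrict R C A) (pinv R C (mrestrict R C A))"
proof -
  have gram: "independent_columns C C (gram R A)"
    using gram_independent_columns[OF assms(1,3)] .
  obtain G where "is_pinv R C (mrestrict R C A) G"
    using is_pinv_exists[OF assms(2) gram] .
  then have "\<exists>!G. is_pinv R C (mrestrict R C A) G"
    using is_pinv_unique[OF gram] by blast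
  then show ?thesis
    unfolding pinv_eq_The_is_pinv by (rule theI')
qed

lemma pinv_normal_equations:
  fixes y :: "nat \<Rightarrow> real"
  assumes "finite R" "finite C" "independent_columns R C A" "i \<in> C"
  defines "x \<equiv> mulvec C R (pinv R C (mrestrict R C A)) y"
  shows "(\<Sum>r\<in>R. A r i * ((\<Sum>j\<in>C. A r j * x j) - y r)) = 0"
proof -
  define G where "G = pinv R C (mrestrict R C A)"
  have "(\<Sum>r\<in>R. A r i * (\<Sum>j\<in>C. A r j * x j)) = (\<Sum>j\<in>C. gram R A i j * x j)"
    by (rule gram_mulvec[symmetric])
  also have "\<dots> = (\<Sum>j\<in>C. gram R A i j * (\<Sum>r\<in>R. G j r * y r))"
    by (simp add: x_def G_def mulvec_def)
  also have "\<dots> = (\<Sum>r\<in>R. mprod C (gram R A) G i r * y r)"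
    by (simp add: mprod_def sum_distrib_left sum_distrib_right mult.assoc sum.swap[of _ C])
  also have "\<dots> = (\<Sum>r\<in>R. A r i * y r)"
    using is_pinv_gram[OF pinv_is_pinv[OF assms(1-3)] assms(4)] by (simp add: G_def)
  finally show ?thesis
    by (simp add: right_diff_distrib sum_subtractf)
qed

section \<open>Restricted isometry constants\<close>

lemma vnorm_eq_L2_set: "vnorm I v = L2_set v I"
  by (simp add: vnorm_def L2_set_def)

definition dot :: "'a set \<Rightarrow> ('a \<Rightarrow> real) \<Rightarrow> ('a \<Rightarrow> real) \<Rightarrow> real" where
  "dot I u v = (\<Sum>i\<in>I. u i * v i)"

lemma dot_self: "finite I \<Longrightarrow> dot I v v = (L2_set v I)\<^sup>2"
  by (simp add: dot_def L2_set_def sum_nonneg power2_eq_square)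

lemma abs_dot_le_L2_set: "\<bar>dot I u v\<bar> \<le> L2_set u I * L2_set v I"
proof -
  have "\<bar>dot I u v\<bar> \<le> (\<Sum>i\<in>I. \<bar>u i\<bar> * \<bar>v i\<bar>)"
    unfolding dot_def abs_mult[symmetric] by (rule sum_abs)
  also have "\<dots> \<le> L2_set u I * L2_set v I"
    by (rule L2_set_mult_ineq)
  finally show ?thesis .
qed

lemma mulvec_lincomb:
  "mulvec R C M (\<lambda>j. a * u j + b * v j) = (\<lambda>i. a * mulvec R C M u i + b * mulvec R C M v i)"
  by (auto simp: mulvec_def fun_eq_iff sum.distrib sum_distrib_left algebra_simps)

lemma L2_set_mulvec_le:
  assumes "finite C"
  shows "(L2_set (mulvec R C M v) R)\<^sup>2 \<le> (\<Sum>i\<in>R. \<Sum>j\<in>C. (M i j)\<^sup>2) * (L2_set v C)\<^sup>2"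
proof (cases "finite R")
  case True
  have "(L2_set (mulvec R C M v) R)\<^sup>2 = (\<Sum>i\<in>R. (\<Sum>j\<in>C. M i j * v j)\<^sup>2)"
    using True by (simp add: L2_set_def sum_nonneg mulvec_def)
  also have "\<dots> \<le> (\<Sum>i\<in>R. (L2_set (M i) C * L2_set v C)\<^sup>2)"
  proof (rule sum_mono)
    fix i
    show "(\<Sum>j\<in>C. M i j * v j)\<^sup>2 \<le> (L2_set (M i) C * L2_set v C)\<^sup>2"
      using abs_dot_le_L2_set[of C "M i" v] by (simp add: dot_def abs_le_square_iff[symmetric])
  qed
  also have "\<dots> = (\<Sum>i\<in>R. \<Sum>j\<in>C. (M i j)\<^sup>2) * (L2_set v C)\<^sup>2"
    using assms by (simp add: L2_set_def sum_nonneg sum_distrib_right power_mult_distrib)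
  finally show ?thesis .
qed simp

definition rip_admissible :: "nat \<Rightarrow> nat \<Rightarrow> (nat \<Rightarrow> nat \<Rightarrow> real) \<Rightarrow> nat \<Rightarrow> real set" where
  "rip_admissible m n A l = {\<delta>. \<delta> \<ge> 0 \<and>
      (\<forall>x. card {i\<in>{0..<n}. x i \<noteq> 0} \<le> l \<longrightarrow>
         (1 - \<delta>) * (vnorm {0..<n} x)\<^sup>2 \<le> (vnorm {0..<m} (mulvec {0..<m} {0..<n} A x))\<^sup>2 \<and>
         (vnorm {0..<m} (mulvec {0..<m} {0..<n} A x))\<^sup>2 \<le> (1 + \<delta>) * (vnorm {0..<n} x)\<^sup>2)}"

lemma rip_const_eq_Inf: "rip_const m n A l = Inf (rip_admissible m n A l)"
  by (simp add: rip_const_def rip_admissible_def)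

lemma rip_admissible_iff:
  "\<delta> \<in> rip_admissible m n A l \<longleftrightarrow> \<delta> \<ge> 0 \<and>
     (\<forall>x. card {i\<in>{0..<n}. x i \<noteq> 0} \<le> l \<longrightarrow>
        \<bar>(L2_set (mulvec {0..<m} {0..<n} A x) {0..<m})\<^sup>2 - (L2_set x {0..<n})\<^sup>2\<bar>
          \<le> \<delta> * (L2_set x {0..<n})\<^sup>2)"
  by (auto simp: rip_admissible_def vnorm_eq_L2_set abs_le_iff algebra_simps)

lemma rip_admissible_nonempty: "rip_admissible m n A l \<noteq> {}"
proof -
  define F where "F = (\<Sum>i\<in>{0..<m}. \<Sum>j\<in>{0..<n}. (A i j)\<^sup>2)"
  have "F \<ge> 0"
    unfolding F_def by (intro sum_nonneg) auto
  have "1 + F \<in> rip_admissible m n A l"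
    unfolding rip_admissible_iff
  proof (intro conjI allI impI)
    fix x :: "nat \<Rightarrow> real"
    have "(L2_set (mulvec {0..<m} {0..<n} A x) {0..<m})\<^sup>2 \<le> F * (L2_set x {0..<n})\<^sup>2"
      unfolding F_def by (rule L2_set_mulvec_le) simp
    moreover have "\<bar>b - a\<bar> \<le> (1 + F) * a" if "b \<le> F * a" "0 \<le> a" "0 \<le> b" for a b :: real
      using that mult_nonneg_nonneg[OF \<open>F \<ge> 0\<close> \<open>0 \<le> a\<close>] unfolding abs_le_iff distrib_right
      by linarith
    ultimately show "\<bar>(L2_set (mulvec {0..<m} {0..<n} A x) {0..<m})\<^sup>2 - (L2_set x {0..<n})\<^sup>2\<bar>
        \<le> (1 + F) * (L2_set x {0..<n})\<^sup>2"
      by simp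
  qed (use \<open>F \<ge> 0\<close> in simp)
  then show ?thesis
    by blast
qed

lemma rip_const_nonneg: "rip_const m n A l \<ge> 0"
  unfolding rip_const_eq_Inf
  by (rule cInf_greatest[OF rip_admissible_nonempty]) (simp add: rip_admissible_def)

lemma rip_const_mono: "l \<le> l' \<Longrightarrow> rip_const m n A l \<le> rip_const m n A l'"
  unfolding rip_const_eq_Inf
  by (rule cInf_superset_mono[OF rip_admissible_nonempty])
    (auto simp: rip_admissible_def bdd_below_def)

lemma rip_const_bound:
  assumes "card {i\<in>{0..<n}. x i \<noteq> 0} \<le> l"
  shows "\<bar>(L2_set (mulvec {0..<m} {0..<n} A x) {0..<m})\<^sup>2 - (L2_set x {0..<n})\<^sup>2\<bar>
           \<le> rip_const m n A l * (L2_set x {0..<n})\<^sup>2"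
proof -
  define a where "a = (L2_set x {0..<n})\<^sup>2"
  define b where "b = (L2_set (mulvec {0..<m} {0..<n} A x) {0..<m})\<^sup>2"
  have admissible: "\<bar>b - a\<bar> \<le> \<delta> * a" if "\<delta> \<in> rip_admissible m n A l" for \<delta>
    using that assms unfolding rip_admissible_iff a_def b_def by blast
  show ?thesis
  proof (cases "a = 0")
    case True
    obtain \<delta> where "\<delta> \<in> rip_admissible m n A l"
      using rip_admissible_nonempty by blast
    with True admissible show ?thesis
      by (fastforce simp: a_def b_def)
  next
    case False
    then have "a > 0"
      by (simp add: a_def)
    have "\<bar>b - a\<bar> / a \<le> rip_const m n A l"
      unfolding rip_const_eq_Inf
      by (rule cInf_greatest[OF rip_admissible_nonempty])
        (use admissible \<open>a > 0\<close> in \<open>simp add: divide_le_eq\<close>)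
    with \<open>a > 0\<close> show ?thesis
      by (simp add: a_def b_def divide_le_eq)
  qed
qed

lemma rip_const_lower:
  assumes "card {i\<in>{0..<n}. x i \<noteq> 0} \<le> l"
  shows "(1 - rip_const m n A l) * (L2_set x {0..<n})\<^sup>2
           \<le> (L2_set (mulvec {0..<m} {0..<n} A x) {0..<m})\<^sup>2"
  using rip_const_bound[OF assms, of m A] by (simp add: abs_le_iff algebra_simps)

lemma rip_const_upper:
  assumes "card {i\<in>{0..<n}. x i \<noteq> 0} \<le> l"
  shows "(L2_set (mulvec {0..<m} {0..<n} A x) {0..<m})\<^sup>2
           \<le> (1 + rip_const m n A l) * (L2_set x {0..<n})\<^sup>2"
  using rip_const_bound[OF assms, of m A] by (simp add: abs_le_iff algebra_simps)

lemma L2_set_lincomb_sq: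
  assumes "finite I"
  shows "(L2_set (\<lambda>i. a * u i + c * v i) I)\<^sup>2
           = a\<^sup>2 * (L2_set u I)\<^sup>2 + 2 * a * c * dot I u v + c\<^sup>2 * (L2_set v I)\<^sup>2"
proof -
  have "(L2_set (\<lambda>i. a * u i + c * v i) I)\<^sup>2 = (\<Sum>i\<in>I. (a * u i + c * v i)\<^sup>2)"
    by (simp add: L2_set_def sum_nonneg)
  also have "\<dots> = (\<Sum>i\<in>I. a\<^sup>2 * (u i)\<^sup>2 + 2 * a * c * (u i * v i) + c\<^sup>2 * (v i)\<^sup>2)"
    by (rule sum.cong) (simp_all add: power2_eq_square algebra_simps)
  also have "\<dots> = a\<^sup>2 * (L2_set u I)\<^sup>2 + 2 * a * c * dot I u v + c\<^sup>2 * (L2_set v I)\<^sup>2"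
    using assms by (simp add: L2_set_def sum_nonneg sum.distrib dot_def flip: sum_distrib_left)
  finally show ?thesis .
qed

(* Polarization: with a = ||w|| and b = ||d||, the vectors a d + b w and a d - b w both have
   squared norm 2 a^2 b^2, and the difference of the squared norms of their images is
   4 a b <A d, A w>. *)
lemma rip_inner_product_bound:
  assumes disjoint: "\<And>i. d i = 0 \<or> w i = 0"
    and card: "card ({i\<in>{0..<n}. d i \<noteq> 0} \<union> {i\<in>{0..<n}. w i \<noteq> 0}) \<le> l"
  shows "dot {0..<m} (mulvec {0..<m} {0..<n} A d) (mulvec {0..<m} {0..<n} A w)
           \<le> rip_const m n A l * L2_set d {0..<n} * L2_set w {0..<n}"
proof -
  let ?A = "mulvec {0..<m} {0..<n} A"
  define \<delta> where "\<delta> = rip_const m n A l"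
  define a where "a = L2_set w {0..<n}"
  define b where "b = L2_set d {0..<n}"
  define D where "D = dot {0..<m} (?A d) (?A w)"
  show ?thesis
  proof (cases "a = 0 \<or> b = 0")
    case True
    then have "(\<forall>i\<in>{0..<n}. w i = 0) \<or> (\<forall>i\<in>{0..<n}. d i = 0)"
      by (auto simp: a_def b_def L2_set_eq_0_iff)
    then have "D = 0"
      by (auto simp: D_def dot_def mulvec_def)
    with True show ?thesis
      by (auto simp: D_def a_def b_def)
  next
    case False
    then have "a * b > 0"
      by (simp add: a_def b_def order.strict_iff_order)
    have "dot {0..<n} d w = 0"
      unfolding dot_def by (rule sum.neutral) (use disjoint in auto)
    then have norm: "(L2_set (\<lambda>i. a * d i + c * w i) {0..<n})\<^sup>2 = 2 * (a * b)\<^sup>2" if "c\<^sup>2 = b\<^sup>2" for c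
      using that by (simp add: L2_set_lincomb_sq a_def b_def power_mult_distrib)
    have card_c: "card {i\<in>{0..<n}. a * d i + c * w i \<noteq> 0} \<le> l" for c
      by (rule le_trans[OF card_mono card]) auto
    have image: "(L2_set (?A (\<lambda>i. a * d i + c * w i)) {0..<m})\<^sup>2
        = a\<^sup>2 * (L2_set (?A d) {0..<m})\<^sup>2 + 2 * a * c * D + c\<^sup>2 * (L2_set (?A w) {0..<m})\<^sup>2" for c
      by (simp add: mulvec_lincomb L2_set_lincomb_sq D_def)
    have "a\<^sup>2 * (L2_set (?A d) {0..<m})\<^sup>2 + 2 * a * b * D + b\<^sup>2 * (L2_set (?A w) {0..<m})\<^sup>2
        \<le> (1 + \<delta>) * (2 * (a * b)\<^sup>2)"
      using rip_const_upper[OF card_c, of m A b] unfolding image norm[OF refl] \<delta>_def .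
    moreover have "(1 - \<delta>) * (2 * (a * b)\<^sup>2)
        \<le> a\<^sup>2 * (L2_set (?A d) {0..<m})\<^sup>2 - 2 * a * b * D + b\<^sup>2 * (L2_set (?A w) {0..<m})\<^sup>2"
      using rip_const_lower[OF card_c, of m A "- b"] norm[of "- b"] unfolding image \<delta>_def
      by simp
    ultimately have "a * b * D \<le> a * b * (\<delta> * (a * b))"
      by (simp add: algebra_simps power2_eq_square)
    then have "D \<le> \<delta> * (a * b)"
      using \<open>a * b > 0\<close> by (rule mult_left_le_imp_le)
    then show ?thesis
      by (simp add: D_def \<delta>_def a_def b_def mult_ac)
  qed
qed

lemma rip_independent_columns:
  assumes "rip_const m n A l < 1" "S \<subseteq> {0..<n}" "card S \<le> l"
  shows "independent_columns {0..<m} S A"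
proof (rule independent_columnsI)
  fix v assume v: "\<forall>j. j \<notin> S \<longrightarrow> v j = 0" and Av: "\<forall>r\<in>{0..<m}. (\<Sum>j\<in>S. A r j * v j) = 0"
  have "{i\<in>{0..<n}. v i \<noteq> 0} \<subseteq> S"
    using v by blast
  then have "card {i\<in>{0..<n}. v i \<noteq> 0} \<le> card S"
    using finite_subset[OF assms(2)] by (intro card_mono) simp_all
  with assms(3) have card: "card {i\<in>{0..<n}. v i \<noteq> 0} \<le> l"
    by simp
  have "mulvec {0..<m} {0..<n} A v = 0"
  proof
    fix r
    have "(\<Sum>j\<in>{0..<n}. A r j * v j) = (\<Sum>j\<in>S. A r j * v j)"
      using v assms(2) by (intro sum.mono_neutral_right) auto
    with Av show "mulvec {0..<m} {0..<n} A v r = 0 r"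
      by (simp add: mulvec_def)
  qed
  with rip_const_lower[OF card, of m A]
  have "(1 - rip_const m n A l) * (L2_set v {0..<n})\<^sup>2 \<le> 0"
    by (simp add: L2_set_def)
  with assms(1) have "L2_set v {0..<n} = 0"
    by (simp add: mult_le_0_iff)
  with v assms(2) show "v = 0"
    by (auto simp: L2_set_eq_0_iff fun_eq_iff)
qed

section \<open>Support estimates and the error bound\<close>

lemma largest_subset: "largest n k v \<subseteq> {0..<n}"
  unfolding largest_def by auto

lemma card_largest: "card (largest n k v) \<le> k"
proof -
  define beats where "beats j i \<longleftrightarrow> \<bar>v j\<bar> > \<bar>v i\<bar> \<or> (\<bar>v j\<bar> = \<bar>v i\<bar> \<and> j > i)" for i j
  define rank where "rank i = card {j\<in>{0..<n}. beats j i}" for i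
  have largest_eq: "largest n k v = {i\<in>{0..<n}. rank i < k}"
    unfolding largest_def rank_def beats_def ..
  have rank_less: "rank j < rank i" if "beats j i" "j < n" for i j
  proof -
    have "{l\<in>{0..<n}. beats l j} \<subset> {l\<in>{0..<n}. beats l i}"
      using that unfolding beats_def by auto
    then show ?thesis
      unfolding rank_def by (intro psubset_card_mono) auto
  qed
  have "inj_on rank {0..<n}"
  proof (rule inj_onI)
    fix i j assume "i \<in> {0..<n}" "j \<in> {0..<n}" "rank i = rank j"
    moreover have "i \<noteq> j \<Longrightarrow> beats j i \<or> beats i j"
      unfolding beats_def by auto
    ultimately show "i = j"
      using rank_less by fastforce
  qed
  then have "card (largest n k v) = card (rank ` largest n k v)"
    using largest_subset by (metis card_image inj_on_subset)
  also have "\<dots> \<le> card {..<k}"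
    unfolding largest_eq by (intro card_mono) auto
  finally show ?thesis
    by simp
qed

lemma L2_set_restrict:
  assumes "finite I" "T \<subseteq> I"
  shows "L2_set (\<lambda>i. if i \<in> T then f i else 0) I = L2_set f T"
proof -
  have "L2_set (\<lambda>i. if i \<in> T then f i else 0) I = L2_set (\<lambda>i. if i \<in> T then f i else 0) T"
    unfolding L2_set_def using assms by (intro arg_cong[where f = sqrt] sum.mono_neutral_right) auto
  also have "\<dots> = L2_set f T"
    by (rule L2_set_cong) auto
  finally show ?thesis .
qed

lemma normal_equations_orthogonal:
  fixes A :: "nat \<Rightarrow> nat \<Rightarrow> real" and d z :: "nat \<Rightarrow> real"
  assumes "\<forall>i\<in>S. (\<Sum>r\<in>R. A r i * z r) = 0"
  shows "(\<Sum>r\<in>R. (\<Sum>i\<in>S. A r i * d i) * z r) = 0"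
proof -
  have "(\<Sum>r\<in>R. (\<Sum>i\<in>S. A r i * d i) * z r) = (\<Sum>r\<in>R. \<Sum>i\<in>S. d i * (A r i * z r))"
    by (intro sum.cong refl) (simp add: sum_distrib_left sum_distrib_right mult_ac)
  also have "\<dots> = (\<Sum>i\<in>S. \<Sum>r\<in>R. d i * (A r i * z r))"
    by (rule sum.swap)
  also have "\<dots> = (\<Sum>i\<in>S. d i * (\<Sum>r\<in>R. A r i * z r))"
    by (simp add: sum_distrib_left)
  finally show ?thesis
    using assms by simp
qed

lemma le_divide_if_quadratic_le:
  fixes c p t :: real
  assumes "0 < c" "0 \<le> p" "0 \<le> t" "c * t\<^sup>2 \<le> p * t"
  shows "t \<le> p / c"
proof (cases "t = 0")
  case False
  with assms(3) have "t > 0"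
    by simp
  with assms(4) have "c * t \<le> p"
    by (simp add: power2_eq_square mult.assoc[symmetric])
  with assms(1) show ?thesis
    by (simp add: le_divide_eq mult.commute)
qed (use assms in simp)

lemma rip_error_bound_of_orthogonal_residual:
  fixes m n k :: nat and A :: "nat \<Rightarrow> nat \<Rightarrow> real" and d w e :: "nat \<Rightarrow> real"
  defines "Av \<equiv> mulvec {0..<m} {0..<n} A"
  assumes disjoint: "\<And>i. d i = 0 \<or> w i = 0"
    and supp_d: "card {i\<in>{0..<n}. d i \<noteq> 0} \<le> k"
    and supp_dw: "card ({i\<in>{0..<n}. d i \<noteq> 0} \<union> {i\<in>{0..<n}. w i \<noteq> 0}) \<le> 2 * k"
    and "rip_const m n A k < 1"
    and orthogonal: "dot {0..<m} (Av d) (\<lambda>r. Av d r - Av w r - e r) = 0"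
  shows "L2_set d {0..<n}
           \<le> rip_const m n A (2 * k) / (1 - rip_const m n A k) * L2_set w {0..<n}
             + sqrt (1 + rip_const m n A k) / (1 - rip_const m n A k) * L2_set e {0..<m}"
proof -
  define \<delta> where "\<delta> = rip_const m n A k"
  define \<delta>2 where "\<delta>2 = rip_const m n A (2 * k)"
  have energy: "(L2_set (Av d) {0..<m})\<^sup>2 = dot {0..<m} (Av d) (Av w) + dot {0..<m} (Av d) e"
    using orthogonal by (simp add: dot_self[symmetric] dot_def right_diff_distrib sum_subtractf)
  have "dot {0..<m} (Av d) (Av w) \<le> \<delta>2 * L2_set d {0..<n} * L2_set w {0..<n}"
    unfolding Av_def \<delta>2_def using disjoint supp_dw by (rule rip_inner_product_bound)
  then have cross: "dot {0..<m} (Av d) (Av w) \<le> \<delta>2 * L2_set w {0..<n} * L2_set d {0..<n}"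
    by (simp add: mult_ac)
  have "(L2_set (Av d) {0..<m})\<^sup>2 \<le> (sqrt (1 + \<delta>) * L2_set d {0..<n})\<^sup>2"
    using rip_const_upper[OF supp_d, of m A] rip_const_nonneg[of m n A k]
    by (simp add: Av_def \<delta>_def power_mult_distrib)
  then have "L2_set (Av d) {0..<m} \<le> sqrt (1 + \<delta>) * L2_set d {0..<n}"
    by (rule power2_le_imp_le) (simp add: \<delta>_def rip_const_nonneg)
  then have "L2_set (Av d) {0..<m} * L2_set e {0..<m} \<le> sqrt (1 + \<delta>) * L2_set d {0..<n} * L2_set e {0..<m}"
    by (rule mult_right_mono) simp
  then have "dot {0..<m} (Av d) e \<le> sqrt (1 + \<delta>) * L2_set d {0..<n} * L2_set e {0..<m}"
    by (rule order_trans[OF abs_le_D1[OF abs_dot_le_L2_set]])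
  then have noise: "dot {0..<m} (Av d) e \<le> sqrt (1 + \<delta>) * L2_set e {0..<m} * L2_set d {0..<n}"
    by (simp add: mult_ac)
  have "(1 - \<delta>) * (L2_set d {0..<n})\<^sup>2
      \<le> (\<delta>2 * L2_set w {0..<n} + sqrt (1 + \<delta>) * L2_set e {0..<m}) * L2_set d {0..<n}"
    using rip_const_lower[OF supp_d, of m A] energy cross noise
    unfolding Av_def \<delta>_def distrib_right by linarith
  then have "L2_set d {0..<n} \<le> (\<delta>2 * L2_set w {0..<n} + sqrt (1 + \<delta>) * L2_set e {0..<m}) / (1 - \<delta>)"
    using \<open>rip_const m n A k < 1\<close>
    by (intro le_divide_if_quadratic_le add_nonneg_nonneg mult_nonneg_nonneg)
      (simp_all add: \<delta>_def \<delta>2_def rip_const_nonneg)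
  then show ?thesis
    by (simp add: \<delta>_def \<delta>2_def add_divide_distrib)
qed

lemma restricted_least_squares_error:
  fixes m n k :: nat and A :: "nat \<Rightarrow> nat \<Rightarrow> real" and x xstar e y :: "nat \<Rightarrow> real"
  defines "Sstar \<equiv> {i\<in>{0..<n}. xstar i \<noteq> 0}"
  assumes S: "S \<subseteq> {0..<n}" "card S \<le> k" and "card Sstar \<le> k" and "rip_const m n A k < 1"
    and y: "\<forall>r\<in>{0..<m}. y r = (\<Sum>j\<in>{0..<n}. A r j * xstar j) + e r"
    and x: "\<forall>j. j \<notin> S \<longrightarrow> x j = 0"
    and normal: "\<forall>i\<in>S. (\<Sum>r\<in>{0..<m}. A r i * ((\<Sum>j\<in>S. A r j * x j) - y r)) = 0"
  shows "L2_set (\<lambda>i. x i - xstar i) S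
           \<le> rip_const m n A (2 * k) / (1 - rip_const m n A k) * L2_set xstar (Sstar - S)
             + sqrt (1 + rip_const m n A k) / (1 - rip_const m n A k) * L2_set e {0..<m}"
proof -
  let ?A = "mulvec {0..<m} {0..<n} A"
  define d where "d i = (if i \<in> S then x i - xstar i else 0)" for i
  define w where "w i = (if i \<in> Sstar - S then xstar i else 0)" for i
  have finite_S: "finite S"
    using finite_subset[OF S(1)] by simp
  have "{i\<in>{0..<n}. d i \<noteq> 0} \<subseteq> S"
    by (auto simp: d_def split: if_splits)
  with card_mono[OF finite_S] S(2) have supp_d: "card {i\<in>{0..<n}. d i \<noteq> 0} \<le> k"
    by (meson le_trans)
  have "card ({i\<in>{0..<n}. d i \<noteq> 0} \<union> {i\<in>{0..<n}. w i \<noteq> 0}) \<le> card (S \<union> Sstar)"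
    using finite_S by (intro card_mono) (auto simp: d_def w_def Sstar_def)
  also have "\<dots> \<le> 2 * k"
    using card_Un_le[of S Sstar] S(2) \<open>card Sstar \<le> k\<close> by simp
  finally have supp_dw: "card ({i\<in>{0..<n}. d i \<noteq> 0} \<union> {i\<in>{0..<n}. w i \<noteq> 0}) \<le> 2 * k" .
  have residual: "(\<Sum>j\<in>S. A r j * x j) - y r = ?A d r - ?A w r - e r" if "r \<in> {0..<m}" for r
  proof -
    have "(\<Sum>j\<in>S. A r j * x j) = (\<Sum>j\<in>{0..<n}. A r j * x j)"
      using S(1) x by (intro sum.mono_neutral_left) auto
    then have "(\<Sum>j\<in>S. A r j * x j) - y r = (\<Sum>j\<in>{0..<n}. A r j * (x j - xstar j)) - e r"
      using y that by (simp add: right_diff_distrib sum_subtractf)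
    also have "(\<Sum>j\<in>{0..<n}. A r j * (x j - xstar j)) = (\<Sum>j\<in>{0..<n}. A r j * d j - A r j * w j)"
      using x by (intro sum.cong refl) (auto simp: d_def w_def Sstar_def right_diff_distrib)
    finally show ?thesis
      using that by (simp add: mulvec_def sum_subtractf)
  qed
  have Ad: "?A d r = (\<Sum>i\<in>S. A r i * d i)" if "r \<in> {0..<m}" for r
    using that S(1) by (simp add: mulvec_def d_def sum.mono_neutral_right)
  have "dot {0..<m} (?A d) (\<lambda>r. ?A d r - ?A w r - e r)
      = (\<Sum>r\<in>{0..<m}. (\<Sum>i\<in>S. A r i * d i) * ((\<Sum>j\<in>S. A r j * x j) - y r))"
    unfolding dot_def using Ad residual by simp
  also have "\<dots> = 0"
    using normal by (rule normal_equations_orthogonal)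
  finally have "dot {0..<m} (?A d) (\<lambda>r. ?A d r - ?A w r - e r) = 0" .
  moreover have "\<And>i. d i = 0 \<or> w i = 0"
    by (simp add: d_def w_def)
  ultimately have "L2_set d {0..<n}
      \<le> rip_const m n A (2 * k) / (1 - rip_const m n A k) * L2_set w {0..<n}
        + sqrt (1 + rip_const m n A k) / (1 - rip_const m n A k) * L2_set e {0..<m}"
    using supp_d supp_dw \<open>rip_const m n A k < 1\<close> by (intro rip_error_bound_of_orthogonal_residual)
  moreover have "L2_set d {0..<n} = L2_set (\<lambda>i. x i - xstar i) S"
    unfolding d_def using S(1) by (rule L2_set_restrict[OF finite_atLeastLessThan])
  moreover have "L2_set w {0..<n} = L2_set xstar (Sstar - S)"
    unfolding w_def by (rule L2_set_restrict) (auto simp: Sstar_def)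
  ultimately show ?thesis
    by simp
qed

theorem lemmaC10:
  fixes m n k :: nat and A :: "nat \<Rightarrow> nat \<Rightarrow> real"
    and xstar e y X0 :: "nat \<Rightarrow> real" and \<eta> :: real and t :: nat
  assumes "m > 0" "n > 0" "k > 0"
    and "2 * k + 1 \<le> n"
    and "rip_const m n A (2 * k + 1) < 1"
    and "card {i\<in>{0..<n}. xstar i \<noteq> 0} \<le> k"
    and "\<forall>r\<in>{0..<m}. y r = (\<Sum>j\<in>{0..<n}. A r j * xstar j) + e r"
    and "\<eta> > 0"
  shows "let X = sea_X m n k A y \<eta> X0 t;
             S = sea_S n k X;
             x = sea_x m n k A y X;
             Sstar = {i\<in>{0..<n}. xstar i \<noteq> 0};
             u = (\<lambda>i. if i \<in> Sstar - S then - \<eta> * xstar i else 0)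
         in vnorm S (\<lambda>i. x i - xstar i)
            \<le> rip_const m n A (2 * k) / (1 - rip_const m n A k) * (vnorm {0..<n} u / \<eta>)
              + sqrt (1 + rip_const m n A k) / (1 - rip_const m n A k) * vnorm {0..<m} e"
proof -
  define X where "X = sea_X m n k A y \<eta> X0 t"
  define S where "S = sea_S n k X"
  define x where "x = sea_x m n k A y X"
  define Sstar where "Sstar = {i\<in>{0..<n}. xstar i \<noteq> 0}"
  define u where "u = (\<lambda>i. if i \<in> Sstar - S then - \<eta> * xstar i else 0)"
  have S: "S \<subseteq> {0..<n}" "card S \<le> k"
    unfolding S_def sea_S_def by (rule largest_subset, rule card_largest)
  have "rip_const m n A k < 1"
    using rip_const_mono[of k "2 * k + 1" m n A] assms(5) by simp
  have x: "x = mulvec S {0..<m} (pinv {0..<m} S (mrestrict {0..<m} S A)) y"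
    by (simp add: x_def sea_x_def S_def Let_def)
  have "independent_columns {0..<m} S A"
    using \<open>rip_const m n A k < 1\<close> S by (rule rip_independent_columns)
  then have normal: "\<forall>i\<in>S. (\<Sum>r\<in>{0..<m}. A r i * ((\<Sum>j\<in>S. A r j * x j) - y r)) = 0"
    unfolding x using finite_subset[OF S(1)] by (simp add: pinv_normal_equations)
  have "L2_set u {0..<n} = L2_set (\<lambda>i. - \<eta> * xstar i) (Sstar - S)"
    unfolding u_def by (rule L2_set_restrict) (auto simp: Sstar_def)
  also have "\<dots> = L2_set (\<lambda>i. \<eta> * xstar i) (Sstar - S)"
    by (simp add: L2_set_def)
  also have "\<dots> = \<eta> * L2_set xstar (Sstar - S)"
    using assms(8) by (simp add: L2_set_right_distrib)
  finally have "L2_set u {0..<n} / \<eta> = L2_set xstar (Sstar - S)"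
    using assms(8) by simp
  with restricted_least_squares_error[OF S assms(6) \<open>rip_const m n A k < 1\<close> assms(7), of x]
    normal
  show ?thesis
    unfolding Let_def vnorm_eq_L2_set
    by (simp add: X_def[symmetric] S_def[symmetric] x_def[symmetric] Sstar_def u_def x mulvec_def)
qed

end
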